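(* Suppose Assumptions A1 and A2 hold, let $\beta>0$, and let $(x(t),y(t))$, $t\ge0$, be the solution of the prediction-correction dynamics $$\dot x=-F(x,y),\qquad \dot y=-[\nabla^2_{yy}g(x,y)]^{-1}\big[\beta\nabla_y g(x,y)+\nabla^2_{yx}g(x,y)\dot x\big]$$ from an arbitrary initialization $(x(0),y(0))$. Let $x^\star$ be a global minimizer of $\ell$. Then for every $t>0$, $$\frac{1}{2t}\int_0^t\|\nabla\ell(x(\tau))\|^2d\tau\le\frac1t\Big(\ell(x(0))-\ell(x^\star)+\frac{M_1^2}{4\beta\mu_g^2}\|\nabla_y g(x(0),y(0))\|^2\Big).$$
   Context: $f,g:\mathbb{R}^n\times\mathbb{R}^m\to\mathbb{R}$; $\nabla^2_{yx}g(x,y)\in\mathbb{R}^{m\times n}$ is the Jacobian with respect to $x$ of $\nabla_y g(x,y)$, $\nabla^2_{yy}g$ the Hessian in $y$. Assumption A1: $f$ is continuously differentiable; $\|\nabla_x f\|\le C^f_x$, $\|\nabla_y f\|\le C^f_y$ everywhere; $\nabla_x f,\nabla_y f$ Lipschitz on $\mathbb{R}^n\times\mathbb{R}^m$. Assumption A2: $g$ is twice continuously differentiable; $g(x,\cdot)$ is $\mu_g$-strongly convex for each $x$; $\nabla_y g(x,\cdot)$ is $L^g_{yy}$-Lipschitz for each $x$ and $\nabla_y g(\cdot,y)$ is $L^g_{yx}$-Lipschitz for each $y$; $\nabla^2_{yx}g$, $\nabla^2_{yy}g$ are Lipschitz on $\mathbb{R}^n\times\mathbb{R}^m$. $y^\star(x):=\arg\min_y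 g(x,y)$, $\ell(x):=f(x,y^\star(x))$, $F(x,y):=\nabla_x f(x,y)-\nabla^2_{yx}g(x,y)^\top[\nabla^2_{yy}g(x,y)]^{-1}\nabla_y f(x,y)$; $M_1>0$ is a constant with $\|\nabla\ell(x)-F(x,y)\|\le M_1\|y-y^\star(x)\|$ for all $x,y$. *)

theory Defs
  imports "HOL-Analysis.Analysis"
begin

definition strongly_convex_on :: "real \<Rightarrow> 'a::real_normed_vector set \<Rightarrow> ('a \<Rightarrow> real) \<Rightarrow> bool" where
  "strongly_convex_on \<mu> S h \<longleftrightarrow> convex S \<and>
     (\<forall>a\<in>S. \<forall>b\<in>S. \<forall>\<theta>::real. 0 \<le> \<theta> \<and> \<theta> \<le> 1 \<longrightarrow>
        h (\<theta> *\<^sub>R a + (1 - \<theta>) *\<^sub>R b) \<le> \<theta> * h a + (1 - \<theta>) * h b - \<mu> / 2 * \<theta> * (1 - \<theta>) * (norm (a - b))\<^sup>2)"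

definition ystar :: "('x \<times> 'y \<Rightarrow> real) \<Rightarrow> 'x \<Rightarrow> 'y" where
  "ystar g x = (THE y. \<forall>y'. g (x, y) \<le> g (x, y'))"

definition hyperobj :: "('x \<times> 'y \<Rightarrow> real) \<Rightarrow> ('x \<times> 'y \<Rightarrow> real) \<Rightarrow> 'x \<Rightarrow> real" where
  "hyperobj f g x = f (x, ystar g x)"

definition grad :: "('a::real_inner \<Rightarrow> real) \<Rightarrow> 'a \<Rightarrow> 'a" where
  "grad h x = (THE v. (h has_derivative (\<lambda>d. v \<bullet> d)) (at x))"

definition Fop :: "((real^'n) \<times> (real^'m) \<Rightarrow> real^'n) \<Rightarrow> ((real^'n) \<times> (real^'m) \<Rightarrow> real^'m)
    \<Rightarrow> ((real^'n) \<times> (real^'m) \<Rightarrow> real^'n^'m) \<Rightarrow> ((real^'n) \<times> (real^'m) \<Rightarrow> real^'m^'m)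
    \<Rightarrow> (real^'n) \<times> (real^'m) \<Rightarrow> real^'n" where
  "Fop fx fy gyx gyy z = fx z - transpose (gyx z) *v (matrix_inv (gyy z) *v fy z)"

end

theory Submission
  imports Defs
begin

text \<open>Along the prediction-correction flow the correction step makes the lower-level gradient
  G(s) = grad_y g(x(s), y(s)) satisfy G' = - beta G, so G(s) = exp(- beta s) G(0). Strong convexity
  of g(x, -) gives |y - y*(x)| <= |grad_y g(x, y)| / mu_g, so by the defining property of M1 the
  direction F(x, y) differs from grad l(x) by at most K exp(- beta s), K = M1 |G(0)| / mu_g. Hence
  d/ds l(x(s)) = - grad l . F <= - |grad l|^2 / 2 + K^2 exp(- 2 beta s) / 2; integrating over [0, t]
  and using l(x(t)) >= l(x*) gives the bound. Differentiability of l comes from an implicit-function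
  argument for y*, which is Lipschitz since grad_y g(-, y) is.\<close>

lemma matrix_inv_of_norm_lower_bound:
  fixes A :: "real^'m::finite^'m"
  assumes mu: "\<mu> > 0" and lb: "\<And>v. \<mu> * norm v \<le> norm (A *v v)"
  shows matrix_inv_mult_cancel: "matrix_inv A *v (A *v v) = v"
    and mult_matrix_inv_cancel: "A *v (matrix_inv A *v w) = w"
    and norm_matrix_inv_mult_le: "norm (matrix_inv A *v w) \<le> norm w / \<mu>"
proof -
  have "A *v v = 0 \<Longrightarrow> v = 0" for v
    using lb[of v] mu by (simp add: mult_le_0_iff)
  then have "invertible A"
    using matrix_left_invertible_ker invertible_left_inverse by blast
  then have "A ** matrix_inv A = mat 1 \<and> matrix_inv A ** A = mat 1"
    unfolding invertible_def matrix_inv_def by (rule someI_ex)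
  then show "matrix_inv A *v (A *v v) = v" and AA: "A *v (matrix_inv A *v w) = w"
    by (simp_all add: matrix_vector_mul_assoc)
  have "\<mu> * norm (matrix_inv A *v w) \<le> norm w"
    using lb[of "matrix_inv A *v w"] AA by simp
  then show "norm (matrix_inv A *v w) \<le> norm w / \<mu>"
    using mu by (simp add: field_simps)
qed

lemma continuous_on_matrix_vector_mult:
  fixes A :: "'a::topological_space \<Rightarrow> real^'n::finite^'m::finite"
  assumes "continuous_on S A" "continuous_on S x"
  shows "continuous_on S (\<lambda>s. A s *v x s)"
  unfolding matrix_vector_mult_def
  by (intro continuous_intros continuous_on_vec_lambda continuous_on_sum continuous_on_mult
      assms[THEN continuous_on_compose2[OF continuous_on_component]]) auto

lemma continuous_on_matrix_inv_mult:
  fixes A :: "'a::topological_space \<Rightarrow> real^'m::finite^'m"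
  assumes cA: "continuous_on S A" and cw: "continuous_on S w" and mu: "\<mu> > 0"
    and lb: "\<And>s v. s \<in> S \<Longrightarrow> \<mu> * norm v \<le> norm (A s *v v)"
  shows "continuous_on S (\<lambda>s. matrix_inv (A s) *v w s)"
  unfolding continuous_on_def
proof
  fix s0 assume s0: "s0 \<in> S"
  define q0 where "q0 = matrix_inv (A s0) *v w s0"
  have "A s0 *v q0 = w s0"
    unfolding q0_def using mult_matrix_inv_cancel[OF mu lb[OF s0]] .
  moreover have "continuous_on S (\<lambda>s. w s - A s *v q0)"
    by (intro continuous_on_diff cw continuous_on_matrix_vector_mult[OF cA continuous_on_const])
  ultimately have "((\<lambda>s. w s - A s *v q0) \<longlongrightarrow> 0) (at s0 within S)"
    using s0 unfolding continuous_on_def by fastforce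
  from tendsto_divide[OF tendsto_norm_zero[OF this] tendsto_const[of \<mu>]]
  have "((\<lambda>s. norm (w s - A s *v q0) / \<mu>) \<longlongrightarrow> 0) (at s0 within S)"
    using mu by simp
  moreover have "eventually (\<lambda>s. norm (matrix_inv (A s) *v w s - q0) \<le> norm (w s - A s *v q0) / \<mu>)
      (at s0 within S)"
    unfolding eventually_at_filter
  proof (intro always_eventually allI impI)
    fix s assume "s \<in> S"
    note lbs = lb[OF this]
    have "matrix_inv (A s) *v w s - q0 = matrix_inv (A s) *v (w s - A s *v q0)"
      by (simp add: matrix_vector_mult_diff_distrib matrix_inv_mult_cancel[OF mu lbs])
    then show "norm (matrix_inv (A s) *v w s - q0) \<le> norm (w s - A s *v q0) / \<mu>"
      using norm_matrix_inv_mult_le[OF mu lbs] by simp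
  qed
  ultimately have "((\<lambda>s. matrix_inv (A s) *v w s - q0) \<longlongrightarrow> 0) (at s0 within S)"
    by (rule Lim_null_comparison[rotated])
  then show "((\<lambda>s. matrix_inv (A s) *v w s) \<longlongrightarrow> matrix_inv (A s0) *v w s0) (at s0 within S)"
    unfolding q0_def by (simp add: LIM_zero_iff)
qed

lemma continuous_on_transpose_mult:
  fixes A :: "'a::topological_space \<Rightarrow> real^'n::finite^'m::finite"
  assumes "continuous_on S A" "continuous_on S x"
  shows "continuous_on S (\<lambda>s. transpose (A s) *v x s)"
  unfolding transpose_matrix_vector vector_matrix_mult_def
  by (intro continuous_intros continuous_on_vec_lambda continuous_on_sum continuous_on_mult
      assms[THEN continuous_on_compose2[OF continuous_on_component]]) auto

lemma strongly_convex_on_first_order: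
  fixes \<phi> :: "'a::real_inner \<Rightarrow> real"
  assumes sc: "strongly_convex_on \<mu> UNIV \<phi>"
    and d: "(\<phi> has_derivative (\<lambda>h. G \<bullet> h)) (at a)"
  shows "\<phi> a + G \<bullet> (b - a) + \<mu> / 2 * (norm (b - a))\<^sup>2 \<le> \<phi> b"
proof -
  define \<psi> where "\<psi> = (\<lambda>\<theta>::real. \<phi> (a + \<theta> *\<^sub>R (b - a)))"
  have "((\<lambda>\<theta>::real. a + \<theta> *\<^sub>R (b - a)) has_derivative (\<lambda>\<theta>. \<theta> *\<^sub>R (b - a))) (at 0)"
    by (auto intro!: derivative_eq_intros)
  then have "(\<psi> has_derivative (\<lambda>\<theta>. G \<bullet> (\<theta> *\<^sub>R (b - a)))) (at 0)"
    unfolding \<psi>_def by (rule has_derivative_compose) (simp add: d)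
  then have "(\<psi> has_field_derivative (G \<bullet> (b - a))) (at 0)"
    unfolding has_field_derivative_def by (simp add: mult.commute[of _ "G \<bullet> (b - a)"])
  then have "((\<lambda>\<theta>. (\<psi> \<theta> - \<psi> 0) / \<theta>) \<longlongrightarrow> G \<bullet> (b - a)) (at_right 0)"
    by (simp add: has_field_derivative_iff filterlim_at_split)
  moreover have "((\<lambda>\<theta>. \<phi> b - \<phi> a - \<mu> / 2 * (1 - \<theta>) * (norm (b - a))\<^sup>2) \<longlongrightarrow>
      \<phi> b - \<phi> a - \<mu> / 2 * (1 - 0) * (norm (b - a))\<^sup>2) (at_right (0::real))"
    by (intro tendsto_intros)
  moreover have "eventually (\<lambda>\<theta>. (\<psi> \<theta> - \<psi> 0) / \<theta> \<le> \<phi> b - \<phi> a - \<mu> / 2 * (1 - \<theta>) * (norm (b - a))\<^sup>2)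
      (at_right (0::real))"
    unfolding eventually_at_right_field
  proof (intro exI[of _ 1] conjI allI impI)
    fix \<theta> :: real assume "0 < \<theta>" "\<theta> < 1"
    have eq: "a + \<theta> *\<^sub>R (b - a) = \<theta> *\<^sub>R b + (1 - \<theta>) *\<^sub>R a"
      by (simp add: algebra_simps)
    have "\<phi> (\<theta> *\<^sub>R b + (1 - \<theta>) *\<^sub>R a)
        \<le> \<theta> * \<phi> b + (1 - \<theta>) * \<phi> a - \<mu> / 2 * \<theta> * (1 - \<theta>) * (norm (b - a))\<^sup>2"
      using sc[unfolded strongly_convex_on_def, THEN conjunct2, rule_format, of b a \<theta>]
        \<open>0 < \<theta>\<close> \<open>\<theta> < 1\<close> by simp
    then have "\<psi> \<theta> - \<psi> 0 \<le> \<theta> * (\<phi> b - \<phi> a - \<mu> / 2 * (1 - \<theta>) * (norm (b - a))\<^sup>2)"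
      unfolding \<psi>_def eq by (simp add: algebra_simps)
    with \<open>0 < \<theta>\<close> show "(\<psi> \<theta> - \<psi> 0) / \<theta> \<le> \<phi> b - \<phi> a - \<mu> / 2 * (1 - \<theta>) * (norm (b - a))\<^sup>2"
      by (simp add: divide_simps mult.commute)
  qed simp
  ultimately have "G \<bullet> (b - a) \<le> \<phi> b - \<phi> a - \<mu> / 2 * (1 - 0) * (norm (b - a))\<^sup>2"
    by (intro tendsto_le[OF trivial_limit_at_right_real])
  then show ?thesis by simp
qed

lemma strongly_convex_on_gradient_monotone:
  fixes \<phi> :: "'a::real_inner \<Rightarrow> real"
  assumes sc: "strongly_convex_on \<mu> UNIV \<phi>"
    and d: "\<And>a. (\<phi> has_derivative (\<lambda>h. G a \<bullet> h)) (at a)"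
  shows "\<mu> * (norm (a - b))\<^sup>2 \<le> (G a - G b) \<bullet> (a - b)"
proof -
  have "\<phi> a + G a \<bullet> (b - a) + \<mu> / 2 * (norm (b - a))\<^sup>2 \<le> \<phi> b"
    and "\<phi> b + G b \<bullet> (a - b) + \<mu> / 2 * (norm (a - b))\<^sup>2 \<le> \<phi> a"
    by (intro strongly_convex_on_first_order[OF sc d])+
  moreover have "norm (b - a) = norm (a - b)" and "G a \<bullet> (b - a) = - (G a \<bullet> (a - b))"
    by (simp_all add: norm_minus_commute inner_diff_right)
  ultimately show ?thesis by (simp add: inner_diff_left)
qed

lemma strongly_convex_on_has_minimizer:
  fixes \<phi> :: "'a::euclidean_space \<Rightarrow> real"
  assumes sc: "strongly_convex_on \<mu> UNIV \<phi>" and mu: "\<mu> > 0"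
    and d: "\<And>a. (\<phi> has_derivative (\<lambda>h. G a \<bullet> h)) (at a)"
  shows "\<exists>m. \<forall>v. \<phi> m \<le> \<phi> v"
proof -
  define R where "R = 2 * norm (G 0) / \<mu> + 1"
  have "R > 0" unfolding R_def using mu by (simp add: add_nonneg_pos)
  have "continuous_on (cball 0 R) \<phi>"
    by (intro continuous_at_imp_continuous_on ballI has_derivative_continuous[OF d])
  then obtain m where "m \<in> cball 0 R" and m_min: "\<And>v. v \<in> cball 0 R \<Longrightarrow> \<phi> m \<le> \<phi> v"
    using continuous_attains_inf[OF compact_cball] \<open>R > 0\<close> by (metis centre_in_cball less_imp_le empty_iff)
  have "\<phi> 0 \<le> \<phi> v" if "v \<notin> cball 0 R" for v
  proof -
    have "2 * norm (G 0) \<le> \<mu> * norm v"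
      using that mu unfolding R_def by (simp add: field_simps)
    then have "norm (G 0) * norm v \<le> (\<mu> * norm v / 2) * norm v"
      by (intro mult_right_mono) auto
    then have "norm (G 0) * norm v \<le> \<mu> / 2 * (norm v)\<^sup>2"
      by (simp add: power2_eq_square)
    moreover have "- (norm (G 0) * norm v) \<le> G 0 \<bullet> v"
      using norm_cauchy_schwarz[of "- G 0" v] by simp
    moreover have "\<phi> 0 + G 0 \<bullet> (v - 0) + \<mu> / 2 * (norm (v - 0))\<^sup>2 \<le> \<phi> v"
      by (rule strongly_convex_on_first_order[OF sc d])
    ultimately show ?thesis by simp
  qed
  moreover have "\<phi> m \<le> \<phi> 0"
    using m_min \<open>R > 0\<close> by simp
  ultimately have "\<phi> m \<le> \<phi> v" for v
    using m_min by (cases "v \<in> cball 0 R") (auto intro: order_trans)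
  then show ?thesis by blast
qed

lemma strongly_convex_on_minimizer_unique:
  fixes \<phi> :: "'a::real_normed_vector \<Rightarrow> real"
  assumes sc: "strongly_convex_on \<mu> UNIV \<phi>" and mu: "\<mu> > 0"
    and a_min: "\<forall>v. \<phi> a \<le> \<phi> v" and b_min: "\<forall>v. \<phi> b \<le> \<phi> v"
  shows "a = b"
proof -
  have "\<phi> ((1/2) *\<^sub>R a + (1 - 1/2) *\<^sub>R b) \<le> 1/2 * \<phi> a + (1 - 1/2) * \<phi> b
      - \<mu> / 2 * (1/2) * (1 - 1/2) * (norm (a - b))\<^sup>2"
    using sc[unfolded strongly_convex_on_def, THEN conjunct2, rule_format, of a b "1/2"] by simp
  moreover have "\<phi> a \<le> \<phi> ((1/2) *\<^sub>R a + (1 - 1/2) *\<^sub>R b)" and "\<phi> a = \<phi> b"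
    using a_min b_min by (auto intro: order_antisym)
  ultimately have "\<mu> * (norm (a - b))\<^sup>2 \<le> 0" by simp
  with mu show ?thesis by (simp add: mult_le_0_iff)
qed

lemma strongly_monotone_derivative_lower_bound:
  fixes G :: "'a::real_inner \<Rightarrow> 'a"
  assumes mono: "\<And>a b. \<mu> * (norm (a - b))\<^sup>2 \<le> (G a - G b) \<bullet> (a - b)"
    and d: "(G has_derivative D) (at a)"
  shows "\<mu> * norm v \<le> norm (D v)"
proof -
  define \<rho> where "\<rho> = (\<lambda>t::real. G (a + t *\<^sub>R v) \<bullet> v)"
  have "((\<lambda>t::real. a + t *\<^sub>R v) has_derivative (\<lambda>t. t *\<^sub>R v)) (at 0)"
    by (auto intro!: derivative_eq_intros)
  from has_derivative_compose[OF this] d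
  have "(\<rho> has_derivative (\<lambda>t. D (t *\<^sub>R v) \<bullet> v)) (at 0)"
    unfolding \<rho>_def by (auto intro!: derivative_eq_intros)
  moreover have "D (t *\<^sub>R v) = t *\<^sub>R D v" for t
    using has_derivative_linear[OF d] by (simp add: linear_scale)
  ultimately have "(\<rho> has_field_derivative (D v \<bullet> v)) (at 0)"
    unfolding has_field_derivative_def by (simp add: mult.commute[of _ "D v \<bullet> v"])
  then have "((\<lambda>t. (\<rho> t - \<rho> 0) / t) \<longlongrightarrow> D v \<bullet> v) (at_right 0)"
    by (simp add: has_field_derivative_iff filterlim_at_split)
  moreover have "eventually (\<lambda>t. \<mu> * (norm v)\<^sup>2 \<le> (\<rho> t - \<rho> 0) / t) (at_right (0::real))"
    unfolding eventually_at_right_field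
  proof (intro exI[of _ 1] conjI allI impI)
    fix t :: real assume "0 < t"
    have "\<mu> * (norm ((a + t *\<^sub>R v) - a))\<^sup>2 \<le> (G (a + t *\<^sub>R v) - G a) \<bullet> ((a + t *\<^sub>R v) - a)"
      by (rule mono)
    then have "t * (\<mu> * (norm v)\<^sup>2 * t) \<le> t * (\<rho> t - \<rho> 0)"
      using \<open>0 < t\<close> by (simp add: \<rho>_def inner_diff_left power_mult_distrib power2_eq_square algebra_simps)
    with \<open>0 < t\<close> show "\<mu> * (norm v)\<^sup>2 \<le> (\<rho> t - \<rho> 0) / t"
      by (simp add: pos_le_divide_eq mult_le_cancel_left_pos)
  qed simp
  ultimately have "\<mu> * (norm v)\<^sup>2 \<le> D v \<bullet> v"
    by (intro tendsto_lowerbound[OF _ _ trivial_limit_at_right_real])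
  also have "\<dots> \<le> norm (D v) * norm v"
    using norm_cauchy_schwarz by (metis abs_le_D1 Cauchy_Schwarz_ineq2)
  finally show ?thesis
    by (cases "v = 0") (auto simp: power2_eq_square)
qed

lemma strongly_monotone_dist_zero_le:
  fixes G :: "'a::real_inner \<Rightarrow> 'a"
  assumes mono: "\<And>a b. \<mu> * (norm (a - b))\<^sup>2 \<le> (G a - G b) \<bullet> (a - b)"
    and mu: "\<mu> > 0" and zero: "G m = 0"
  shows "norm (v - m) \<le> norm (G v) / \<mu>"
proof -
  have "\<mu> * (norm (v - m))\<^sup>2 \<le> (G v - G m) \<bullet> (v - m)" by (rule mono)
  also have "\<dots> \<le> norm (G v) * norm (v - m)"
    using zero norm_cauchy_schwarz by simp
  finally have "\<mu> * norm (v - m) \<le> norm (G v)"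
    by (cases "v = m") (auto simp: power2_eq_square)
  with mu show ?thesis by (simp add: field_simps)
qed

lemma has_vector_derivative_compose_has_derivative:
  assumes "(z has_vector_derivative z') (at s within S)" and "(h has_derivative D) (at (z s))"
  shows "((\<lambda>r. h (z r)) has_vector_derivative D z') (at s within S)"
proof -
  have "((\<lambda>r. h (z r)) has_derivative (\<lambda>r. D (r *\<^sub>R z'))) (at s within S)"
    using has_derivative_compose[OF assms(1)[unfolded has_vector_derivative_def] assms(2)] .
  moreover have "D (r *\<^sub>R z') = r *\<^sub>R D z'" for r
    using has_derivative_linear[OF assms(2)] by (simp add: linear_scale)
  ultimately show ?thesis unfolding has_vector_derivative_def by simp
qed

lemma grad_eqI:
  assumes "(h has_derivative (\<lambda>d. v \<bullet> d)) (at x)"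
  shows "grad h x = v"
  unfolding grad_def
proof (rule the_equality)
  fix w assume "(h has_derivative (\<lambda>d. w \<bullet> d)) (at x)"
  then have "(\<lambda>d. w \<bullet> d) = (\<lambda>d. v \<bullet> d)"
    using has_derivative_unique assms by blast
  then have "(w - v) \<bullet> (w - v) = 0"
    by (metis inner_diff_left diff_self)
  then show "w = v" by simp
qed (use assms in simp)

lemma implicit_function_has_derivative:
  fixes \<Phi> :: "'a::real_normed_vector \<times> 'b::real_normed_vector \<Rightarrow> 'c::real_normed_vector"
  assumes zero: "\<And>u'. \<Phi> (u', \<phi> u') = 0"
    and lip: "\<And>u'. norm (\<phi> u' - \<phi> u) \<le> L * norm (u' - u)"
    and d\<Phi>: "(\<Phi> has_derivative (\<lambda>(h, k). B h + A k)) (at (u, \<phi> u))"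
    and B: "bounded_linear B" and A': "bounded_linear A'" and A'_A: "\<And>k. A' (A k) = k"
  shows "(\<phi> has_derivative (\<lambda>h. - A' (B h))) (at u)"
  unfolding has_derivative_at_alt
proof (intro conjI allI impI)
  show "bounded_linear (\<lambda>h. - A' (B h))"
    by (intro bounded_linear_minus bounded_linear_compose[OF A' B])
  obtain K where K: "K > 0" "\<And>w. norm (A' w) \<le> norm w * K"
    using bounded_linear.pos_bounded[OF A'] by blast
  define c where "c = 1 + \<bar>L\<bar>"
  have c: "c > 0" unfolding c_def by simp
  fix e :: real assume e: "e > 0"
  then obtain d where d: "d > 0" and rem: "\<And>z. norm (z - (u, \<phi> u)) < d \<Longrightarrow>
      norm (\<Phi> z - \<Phi> (u, \<phi> u) - (\<lambda>(h, k). B h + A k) (z - (u, \<phi> u))) \<le> e / (K * c) * norm (z - (u, \<phi> u))"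
    using d\<Phi> K c unfolding has_derivative_at_alt by (metis divide_pos_pos mult_pos_pos)
  show "\<exists>d>0. \<forall>u'. norm (u' - u) < d \<longrightarrow>
      norm (\<phi> u' - \<phi> u - - A' (B (u' - u))) \<le> e * norm (u' - u)"
  proof (intro exI[of _ "d / c"] conjI allI impI)
    show "d / c > 0" using d c by simp
    fix u' assume u': "norm (u' - u) < d / c"
    define h k where "h = u' - u" and "k = \<phi> u' - \<phi> u"
    have hk: "(u', \<phi> u') - (u, \<phi> u) = (h, k)" unfolding h_def k_def by simp
    have "norm k \<le> \<bar>L\<bar> * norm h"
      using order_trans[OF lip mult_right_mono[OF abs_ge_self norm_ge_zero]]
      unfolding h_def k_def .
    then have "norm (h, k) \<le> c * norm h"
      using norm_Pair_le[of h k] unfolding c_def by (simp add: algebra_simps)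
    moreover have "c * norm h < d" using u' c unfolding h_def by (simp add: field_simps)
    \<comment> \<open>on the graph of \<open>\<phi>\<close> the first-order remainder of \<open>\<Phi>\<close> is exactly \<open>- (B h + A k)\<close>\<close>
    ultimately have "norm (B h + A k) \<le> e / (K * c) * norm (h, k)"
      using rem[of "(u', \<phi> u')"] zero[of u'] zero[of u] unfolding hk
      by (simp add: minus_add_distrib[symmetric] del: minus_add_distrib)
    also have "\<dots> \<le> e / (K * c) * (c * norm h)"
      using \<open>norm (h, k) \<le> c * norm h\<close> e K c by (intro mult_left_mono) auto
    finally have "norm (B h + A k) \<le> e / (K * c) * (c * norm h)" .
    then have "norm (B h + A k) * K \<le> e * norm h"
      using K c by (simp add: field_simps)
    moreover have "k + A' (B h) = A' (B h + A k)"
      using linear_add[OF bounded_linear.linear[OF A']] A'_A by simp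
    ultimately show "norm (\<phi> u' - \<phi> u - - A' (B (u' - u))) \<le> e * norm (u' - u)"
      using K(2)[of "B h + A k"] unfolding h_def k_def by simp
  qed
qed

lemma has_vector_derivative_exp_decay:
  fixes G :: "real \<Rightarrow> 'a::real_normed_vector"
  assumes G': "\<And>s. s \<ge> 0 \<Longrightarrow> (G has_vector_derivative (- \<beta> *\<^sub>R G s)) (at s within {0..})"
    and s: "s \<ge> 0"
  shows "G s = exp (- \<beta> * s) *\<^sub>R G 0"
proof -
  have "\<exists>c. \<forall>r\<in>{0..}. exp (\<beta> * r) *\<^sub>R G r = c"
  proof (rule has_derivative_zero_constant)
    fix r :: real assume r: "r \<in> {0..}"
    have "((\<lambda>r. exp (\<beta> * r)) has_real_derivative (\<beta> * exp (\<beta> * r))) (at r within {0..})"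
      by (auto intro!: derivative_eq_intros)
    from has_vector_derivative_scaleR[OF this G'] r
    show "((\<lambda>r. exp (\<beta> * r) *\<^sub>R G r) has_derivative (\<lambda>h. 0)) (at r within {0..})"
      unfolding has_vector_derivative_def by (simp add: algebra_simps)
  qed (rule convex_real_interval)
  then obtain c where "\<And>r. r \<ge> 0 \<Longrightarrow> exp (\<beta> * r) *\<^sub>R G r = c" by auto
  from this[of 0] this[OF s] have "exp (\<beta> * s) *\<^sub>R G s = G 0" by simp
  then have "exp (- \<beta> * s) *\<^sub>R exp (\<beta> * s) *\<^sub>R G s = exp (- \<beta> * s) *\<^sub>R G 0" by simp
  then show ?thesis by (simp add: exp_minus)
qed

lemma integral_norm_sq_le_of_descent:
  fixes a F :: "real \<Rightarrow> 'a::real_inner" and \<phi> :: "real \<Rightarrow> real"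
  assumes t: "0 \<le> t" and \<beta>: "\<beta> > 0"
    and a_cont: "continuous_on {0..t} a"
    and \<phi>': "\<And>s. s \<in> {0..t} \<Longrightarrow> (\<phi> has_vector_derivative - (a s \<bullet> F s)) (at s within {0..t})"
    and bias: "\<And>s. s \<in> {0..t} \<Longrightarrow> norm (a s - F s) \<le> K * exp (- \<beta> * s)"
  shows "(\<lambda>s. (norm (a s))\<^sup>2) integrable_on {0..t}"
    and "integral {0..t} (\<lambda>s. (norm (a s))\<^sup>2) / 2 \<le> \<phi> 0 - \<phi> t + K\<^sup>2 / (4 * \<beta>)"
proof -
  show int: "(\<lambda>s. (norm (a s))\<^sup>2) integrable_on {0..t}"
    by (intro integrable_continuous_interval continuous_intros a_cont)
  have pointwise: "(norm (a s))\<^sup>2 / 2 \<le> - (- (a s \<bullet> F s)) + K\<^sup>2 / 2 * exp (- (2 * \<beta>) * s)"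
    if s: "s \<in> {0..t}" for s
  proof -
    have "(norm (a s - F s))\<^sup>2 \<le> (K * exp (- \<beta> * s))\<^sup>2"
      by (intro power_mono bias s norm_ge_zero)
    also have "\<dots> = K\<^sup>2 * exp (- (2 * \<beta>) * s)"
      by (simp add: power_mult_distrib power2_eq_square mult_exp_exp)
    finally have "(norm (a s))\<^sup>2 - 2 * (a s \<bullet> F s) + (norm (F s))\<^sup>2 \<le> K\<^sup>2 * exp (- (2 * \<beta>) * s)"
      by (simp add: power2_norm_eq_inner inner_diff_left inner_diff_right inner_commute)
    with zero_le_power2[of "norm (F s)"]
    have "(norm (a s))\<^sup>2 \<le> 2 * (a s \<bullet> F s) + K\<^sup>2 * exp (- (2 * \<beta>) * s)"
      by linarith
    then show ?thesis by simp
  qed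
  have ftc: "((\<lambda>s. - (a s \<bullet> F s)) has_integral \<phi> t - \<phi> 0) {0..t}"
    by (rule fundamental_theorem_of_calculus[OF t \<phi>'])
  define E where "E = - exp (- (2 * \<beta>) * t) / (2 * \<beta>) - - exp (- (2 * \<beta>) * 0) / (2 * \<beta>)"
  have exp_int: "((\<lambda>s. exp (- (2 * \<beta>) * s)) has_integral E) {0..t}"
    unfolding E_def
  proof (rule fundamental_theorem_of_calculus[OF t])
    fix s :: real
    have "((\<lambda>s. - exp (- (2 * \<beta>) * s) / (2 * \<beta>)) has_real_derivative exp (- (2 * \<beta>) * s))
        (at s within {0..t})"
      using \<beta> by (auto intro!: derivative_eq_intros)
    then show "((\<lambda>s. - exp (- (2 * \<beta>) * s) / (2 * \<beta>)) has_vector_derivative exp (- (2 * \<beta>) * s))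
        (at s within {0..t})"
      by (simp add: has_real_derivative_iff_has_vector_derivative)
  qed
  have "((\<lambda>s. - (- (a s \<bullet> F s)) + K\<^sup>2 / 2 * exp (- (2 * \<beta>) * s)) has_integral
      - (\<phi> t - \<phi> 0) + K\<^sup>2 / 2 * E) {0..t}"
    by (intro has_integral_add has_integral_neg has_integral_mult_right ftc exp_int)
  moreover have "((\<lambda>s. (norm (a s))\<^sup>2 / 2) has_integral integral {0..t} (\<lambda>s. (norm (a s))\<^sup>2) / 2) {0..t}"
    using has_integral_divide[OF integrable_integral[OF int]] .
  ultimately have "integral {0..t} (\<lambda>s. (norm (a s))\<^sup>2) / 2 \<le> - (\<phi> t - \<phi> 0) + K\<^sup>2 / 2 * E"
    using has_integral_le pointwise by blast
  also have "\<dots> \<le> \<phi> 0 - \<phi> t + K\<^sup>2 / 2 * (1 / (2 * \<beta>))"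
    using \<beta> unfolding E_def by (intro add_mono mult_left_mono) (auto simp: divide_simps)
  finally show "integral {0..t} (\<lambda>s. (norm (a s))\<^sup>2) / 2 \<le> \<phi> 0 - \<phi> t + K\<^sup>2 / (4 * \<beta>)"
    by simp
qed

locale lower_level =
  fixes g :: "(real^'n::finite) \<times> (real^'m::finite) \<Rightarrow> real"
    and gx :: "(real^'n) \<times> (real^'m) \<Rightarrow> real^'n"
    and gy :: "(real^'n) \<times> (real^'m) \<Rightarrow> real^'m"
    and gyx :: "(real^'n) \<times> (real^'m) \<Rightarrow> real^'n^'m"
    and gyy :: "(real^'n) \<times> (real^'m) \<Rightarrow> real^'m^'m"
    and \<mu>g Lgyx :: real
  assumes g_deriv: "\<And>z. (g has_derivative (\<lambda>(dx, dy). gx z \<bullet> dx + gy z \<bullet> dy)) (at z)"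
    and gy_deriv: "\<And>z. (gy has_derivative (\<lambda>(dx, dy). gyx z *v dx + gyy z *v dy)) (at z)"
    and mu_pos: "\<mu>g > 0"
    and g_sc: "\<And>u. strongly_convex_on \<mu>g UNIV (\<lambda>v. g (u, v))"
    and gy_lip_x: "\<And>v. Lgyx-lipschitz_on UNIV (\<lambda>u. gy (u, v))"
begin

lemma g_partial_has_derivative: "((\<lambda>v. g (u, v)) has_derivative (\<lambda>d. gy (u, v) \<bullet> d)) (at v)"
proof -
  have "((\<lambda>v. (u, v)) has_derivative (\<lambda>d. (0, d))) (at v)"
    by (auto intro!: derivative_eq_intros)
  from has_derivative_compose[OF this g_deriv] show ?thesis by simp
qed

lemma gy_partial_has_derivative: "((\<lambda>v. gy (u, v)) has_derivative (\<lambda>d. gyy (u, v) *v d)) (at v)"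
proof -
  have "((\<lambda>v. (u, v)) has_derivative (\<lambda>d. (0, d))) (at v)"
    by (auto intro!: derivative_eq_intros)
  from has_derivative_compose[OF this gy_deriv] show ?thesis
    by (simp add: matrix_vector_mult_0_right)
qed

lemma gy_strongly_monotone: "\<mu>g * (norm (a - b))\<^sup>2 \<le> (gy (u, a) - gy (u, b)) \<bullet> (a - b)"
  by (rule strongly_convex_on_gradient_monotone[OF g_sc g_partial_has_derivative])

lemma gyy_norm_lower_bound: "\<mu>g * norm v \<le> norm (gyy z *v v)"
  using strongly_monotone_derivative_lower_bound[OF gy_strongly_monotone gy_partial_has_derivative]
  by (cases z) simp

lemma ystar_minimizes: "g (u, ystar g u) \<le> g (u, v)"
proof -
  have "\<exists>!y. \<forall>v. g (u, y) \<le> g (u, v)"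
    using strongly_convex_on_has_minimizer[OF g_sc mu_pos g_partial_has_derivative]
      strongly_convex_on_minimizer_unique[OF g_sc mu_pos] by blast
  then have "\<forall>v. g (u, ystar g u) \<le> g (u, v)"
    unfolding ystar_def by (rule theI')
  then show ?thesis ..
qed

lemma gy_ystar: "gy (u, ystar g u) = 0"
proof -
  have "(\<lambda>d. gy (u, ystar g u) \<bullet> d) = (\<lambda>d. 0)"
    by (rule differential_zero_maxmin[OF UNIV_I open_UNIV g_partial_has_derivative])
      (use ystar_minimizes in blast)
  then show ?thesis by (metis inner_eq_zero_iff)
qed

lemma dist_ystar_le: "norm (v - ystar g u) \<le> norm (gy (u, v)) / \<mu>g"
  by (rule strongly_monotone_dist_zero_le[OF gy_strongly_monotone mu_pos gy_ystar])

lemma ystar_lipschitz: "norm (ystar g u' - ystar g u) \<le> Lgyx / \<mu>g * norm (u' - u)"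
proof -
  have "norm (ystar g u' - ystar g u) \<le> norm (gy (u, ystar g u') - gy (u', ystar g u')) / \<mu>g"
    using dist_ystar_le gy_ystar by simp
  also have "norm (gy (u, ystar g u') - gy (u', ystar g u')) \<le> Lgyx * norm (u' - u)"
    using gy_lip_x[of "ystar g u'"] unfolding lipschitz_on_def
    by (metis UNIV_I dist_norm norm_minus_commute)
  finally show ?thesis
    using mu_pos by (simp add: divide_right_mono)
qed

lemma ystar_has_derivative:
  "(ystar g has_derivative (\<lambda>h. - (matrix_inv (gyy (u, ystar g u)) *v (gyx (u, ystar g u) *v h)))) (at u)"
  by (rule implicit_function_has_derivative[OF gy_ystar ystar_lipschitz gy_deriv
        matrix_vector_mul_bounded_linear matrix_vector_mul_bounded_linear
        matrix_inv_mult_cancel[OF mu_pos gyy_norm_lower_bound]])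

lemma gy_trajectory_exp_decay:
  assumes x_deriv: "\<And>s. s \<ge> 0 \<Longrightarrow> (x has_vector_derivative x' s) (at s within {0..})"
    and y_deriv: "\<And>s. s \<ge> 0 \<Longrightarrow> (y has_vector_derivative
        - (matrix_inv (gyy (x s, y s)) *v (\<beta> *\<^sub>R gy (x s, y s) + gyx (x s, y s) *v x' s)))
        (at s within {0..})"
    and s: "s \<ge> 0"
  shows "gy (x s, y s) = exp (- \<beta> * s) *\<^sub>R gy (x 0, y 0)"
proof (rule has_vector_derivative_exp_decay[OF _ s])
  fix s :: real assume "s \<ge> 0"
  note cancel = mult_matrix_inv_cancel[OF mu_pos gyy_norm_lower_bound]
  have "((\<lambda>r. (x r, y r)) has_vector_derivative (x' s,
      - (matrix_inv (gyy (x s, y s)) *v (\<beta> *\<^sub>R gy (x s, y s) + gyx (x s, y s) *v x' s))))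
      (at s within {0..})"
    by (intro has_vector_derivative_Pair x_deriv y_deriv \<open>s \<ge> 0\<close>)
  from has_vector_derivative_compose_has_derivative[OF this gy_deriv]
  show "((\<lambda>r. gy (x r, y r)) has_vector_derivative - \<beta> *\<^sub>R gy (x s, y s)) (at s within {0..})"
    by (simp add: vec.neg cancel)
qed

end

locale bilevel = lower_level g gx gy gyx gyy \<mu>g Lgyx
  for g :: "(real^'n::finite) \<times> (real^'m::finite) \<Rightarrow> real"
    and gx :: "(real^'n) \<times> (real^'m) \<Rightarrow> real^'n"
    and gy :: "(real^'n) \<times> (real^'m) \<Rightarrow> real^'m"
    and gyx :: "(real^'n) \<times> (real^'m) \<Rightarrow> real^'n^'m"
    and gyy :: "(real^'n) \<times> (real^'m) \<Rightarrow> real^'m^'m"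
    and \<mu>g Lgyx :: real +
  fixes f :: "(real^'n) \<times> (real^'m) \<Rightarrow> real"
    and fx :: "(real^'n) \<times> (real^'m) \<Rightarrow> real^'n"
    and fy :: "(real^'n) \<times> (real^'m) \<Rightarrow> real^'m"
    and M1 :: real
  assumes f_deriv: "\<And>z. (f has_derivative (\<lambda>(dx, dy). fx z \<bullet> dx + fy z \<bullet> dy)) (at z)"
    and fx_cont: "continuous_on UNIV fx" and fy_cont: "continuous_on UNIV fy"
    and gyx_cont: "continuous_on UNIV gyx" and gyy_cont: "continuous_on UNIV gyy"
    and M1_bound: "\<And>u v. norm (grad (hyperobj f g) u - Fop fx fy gyx gyy (u, v))
                          \<le> M1 * norm (v - ystar g u)"
begin

lemma hyperobj_has_derivative:
  "(hyperobj f g has_derivative (\<lambda>h. grad (hyperobj f g) u \<bullet> h)) (at u)"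
proof -
  define z where "z = (u, ystar g u)"
  define D where "D = fx z - transpose (gyx z) *v (transpose (matrix_inv (gyy z)) *v fy z)"
  have "((\<lambda>u. (u, ystar g u)) has_derivative
      (\<lambda>h. (h, - (matrix_inv (gyy z) *v (gyx z *v h))))) (at u)"
    unfolding z_def by (intro has_derivative_Pair has_derivative_ident ystar_has_derivative)
  from has_derivative_compose[OF this f_deriv]
  have "(hyperobj f g has_derivative (\<lambda>h. D \<bullet> h)) (at u)"
    unfolding hyperobj_def z_def[symmetric] D_def
    by (simp add: dot_lmul_matrix inner_diff_left)
  moreover from this have "grad (hyperobj f g) u = D" by (rule grad_eqI)
  ultimately show ?thesis by simp
qed

text \<open>The derivative computed above involves \<open>transpose (matrix_inv gyy)\<close>; \<open>M1_bound\<close> at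
  \<open>v = ystar g u\<close> identifies it with \<open>F\<close>, which spares proving that \<open>gyy\<close> is symmetric.\<close>

lemma grad_hyperobj_eq_Fop: "grad (hyperobj f g) u = Fop fx fy gyx gyy (u, ystar g u)"
  using M1_bound[of u "ystar g u"] by simp

lemma grad_hyperobj_Fop_dist_le:
  assumes "M1 \<ge> 0"
  shows "norm (grad (hyperobj f g) u - Fop fx fy gyx gyy (u, v)) \<le> M1 / \<mu>g * norm (gy (u, v))"
  using order_trans[OF M1_bound mult_left_mono[OF dist_ystar_le assms]] by simp

lemma grad_hyperobj_continuous: "continuous_on UNIV (grad (hyperobj f g))"
proof -
  have "continuous_on UNIV (ystar g)"
    by (intro continuous_at_imp_continuous_on ballI has_derivative_continuous[OF ystar_has_derivative])
  then have along_graph: "continuous_on UNIV (\<lambda>u. h (u, ystar g u))"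
    if "continuous_on UNIV h" for h :: "_ \<Rightarrow> 'b::topological_space"
    by (intro continuous_on_compose2[OF that] continuous_intros) auto
  then have "continuous_on UNIV (\<lambda>u. Fop fx fy gyx gyy (u, ystar g u))"
    unfolding Fop_def
    by (intro continuous_intros continuous_on_transpose_mult continuous_on_matrix_inv_mult[OF _ _ mu_pos]
        along_graph fx_cont fy_cont gyx_cont gyy_cont gyy_norm_lower_bound)
  then show ?thesis
    by (simp add: grad_hyperobj_eq_Fop)
qed

end

theorem theorem3:
  fixes f g :: "(real^('n::finite)) \<times> (real^('m::finite)) \<Rightarrow> real"
    and fx gx :: "(real^'n) \<times> (real^'m) \<Rightarrow> real^'n"
    and fy gy :: "(real^'n) \<times> (real^'m) \<Rightarrow> real^'m"
    and gxx :: "(real^'n) \<times> (real^'m) \<Rightarrow> real^'n^'n"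
    and gxy :: "(real^'n) \<times> (real^'m) \<Rightarrow> real^'m^'n"
    and gyx :: "(real^'n) \<times> (real^'m) \<Rightarrow> real^'n^'m"
    and gyy :: "(real^'n) \<times> (real^'m) \<Rightarrow> real^'m^'m"
    and Cfx Cfy \<mu>g Lgyy Lgyx M1 \<beta> :: real
    and x :: "real \<Rightarrow> real^'n" and y :: "real \<Rightarrow> real^'m"
    and xs :: "real^'n" and t :: real
  assumes
    \<comment> \<open>A1\<close>
    f_deriv: "\<And>z. (f has_derivative (\<lambda>(dx, dy). fx z \<bullet> dx + fy z \<bullet> dy)) (at z)"
    and fx_cont: "continuous_on UNIV fx" and fy_cont: "continuous_on UNIV fy"
    and fx_bnd: "\<And>z. norm (fx z) \<le> Cfx" and fy_bnd: "\<And>z. norm (fy z) \<le> Cfy"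
    and fx_lip: "\<exists>L. L-lipschitz_on UNIV fx" and fy_lip: "\<exists>L. L-lipschitz_on UNIV fy"
    \<comment> \<open>A2\<close>
    and g_deriv: "\<And>z. (g has_derivative (\<lambda>(dx, dy). gx z \<bullet> dx + gy z \<bullet> dy)) (at z)"
    and gx_deriv: "\<And>z. (gx has_derivative (\<lambda>(dx, dy). gxx z *v dx + gxy z *v dy)) (at z)"
    and gy_deriv: "\<And>z. (gy has_derivative (\<lambda>(dx, dy). gyx z *v dx + gyy z *v dy)) (at z)"
    and gxx_cont: "continuous_on UNIV gxx" and gxy_cont: "continuous_on UNIV gxy"
    and gyx_cont: "continuous_on UNIV gyx" and gyy_cont: "continuous_on UNIV gyy"
    and mu_pos: "\<mu>g > 0"
    and g_sc: "\<And>u. strongly_convex_on \<mu>g UNIV (\<lambda>v. g (u, v))"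
    and gy_lip_y: "\<And>u. Lgyy-lipschitz_on UNIV (\<lambda>v. gy (u, v))"
    and gy_lip_x: "\<And>v. Lgyx-lipschitz_on UNIV (\<lambda>u. gy (u, v))"
    and gyx_lip: "\<exists>L. L-lipschitz_on UNIV gyx" and gyy_lip: "\<exists>L. L-lipschitz_on UNIV gyy"
    \<comment> \<open>the constant M1\<close>
    and M1_pos: "M1 > 0"
    and M1_bound: "\<And>u v. norm (grad (hyperobj f g) u - Fop fx fy gyx gyy (u, v))
                          \<le> M1 * norm (v - ystar g u)"
    \<comment> \<open>the prediction-correction dynamics on [0, \<infinity>)\<close>
    and beta_pos: "\<beta> > 0"
    and x_ode: "\<And>s. s \<ge> 0 \<Longrightarrow>
        (x has_vector_derivative - Fop fx fy gyx gyy (x s, y s)) (at s within {0..})"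
    and y_ode: "\<And>s. s \<ge> 0 \<Longrightarrow>
        (y has_vector_derivative
           - (matrix_inv (gyy (x s, y s)) *v
               (\<beta> *\<^sub>R gy (x s, y s) + gyx (x s, y s) *v (- Fop fx fy gyx gyy (x s, y s)))))
        (at s within {0..})"
    \<comment> \<open>global minimizer of l\<close>
    and xs_min: "\<And>u. hyperobj f g xs \<le> hyperobj f g u"
    and t_pos: "t > 0"
  shows "(\<lambda>\<tau>. (norm (grad (hyperobj f g) (x \<tau>)))\<^sup>2) integrable_on {0..t} \<and>
         1 / (2 * t) * integral {0..t} (\<lambda>\<tau>. (norm (grad (hyperobj f g) (x \<tau>)))\<^sup>2)
         \<le> 1 / t * (hyperobj f g (x 0) - hyperobj f g xs
               + M1\<^sup>2 / (4 * \<beta> * \<mu>g\<^sup>2) * (norm (gy (x 0, y 0)))\<^sup>2)"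
proof -
  interpret bilevel g gx gy gyx gyy \<mu>g Lgyx f fx fy M1
    by unfold_locales (fact g_deriv gy_deriv mu_pos g_sc gy_lip_x f_deriv fx_cont fy_cont
        gyx_cont gyy_cont M1_bound)+
  let ?l = "hyperobj f g" and ?F = "\<lambda>s. Fop fx fy gyx gyy (x s, y s)"
  let ?K = "M1 * norm (gy (x 0, y 0)) / \<mu>g"
  have bias: "norm (grad ?l (x s) - ?F s) \<le> ?K * exp (- \<beta> * s)" if "s \<in> {0..t}" for s
    using grad_hyperobj_Fop_dist_le[OF less_imp_le[OF M1_pos], of "x s" "y s"]
      gy_trajectory_exp_decay[OF x_ode y_ode, of s] that by (simp add: mult_ac)
  have deriv: "((\<lambda>s. ?l (x s)) has_vector_derivative - (grad ?l (x s) \<bullet> ?F s)) (at s within {0..t})"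
    if "s \<in> {0..t}" for s
    using has_vector_derivative_within_subset[OF
        has_vector_derivative_compose_has_derivative[OF x_ode hyperobj_has_derivative], of s "{0..t}"]
      that by simp
  have "continuous_on {0..} x"
    by (rule continuous_on_vector_derivative) (use x_ode in simp)
  then have "continuous_on {0..t} x"
    by (rule continuous_on_subset) auto
  then have cont: "continuous_on {0..t} (\<lambda>s. grad ?l (x s))"
    by (rule continuous_on_compose2[OF grad_hyperobj_continuous]) auto
  note descent = integral_norm_sq_le_of_descent[OF less_imp_le[OF t_pos] beta_pos cont deriv bias]
  have "?K\<^sup>2 / (4 * \<beta>) = M1\<^sup>2 / (4 * \<beta> * \<mu>g\<^sup>2) * (norm (gy (x 0, y 0)))\<^sup>2"
    by (simp add: power_mult_distrib power_divide)
  with descent(2) xs_min[of "x t"] have "integral {0..t} (\<lambda>s. (norm (grad ?l (x s)))\<^sup>2) / 2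
      \<le> ?l (x 0) - ?l xs + M1\<^sup>2 / (4 * \<beta> * \<mu>g\<^sup>2) * (norm (gy (x 0, y 0)))\<^sup>2"
    by linarith
  with descent(1) t_pos show ?thesis
    by (simp add: divide_simps)
qed

end
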